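(* Let $K_1,K_2,t$ be positive integers with $K_2<t<K_1K_2$, let $N\ge K_1K_2$, and let $M_1,M_2$ satisfy $$\frac{M_1}{N}=\frac{\binom{K_1K_2-K_2}{t-K_2}}{\binom{K_1K_2}{t}},\qquad \frac{M_2}{N}=\frac{t}{K_1K_2}-\frac{\binom{K_1K_2-K_2}{t-K_2}}{\binom{K_1K_2}{t}}.$$ Then the optimal first-layer load under uncoded placement of the $(K_1,K_2;M_1,M_2;N)$ hierarchical caching system is $$R_1^*=\frac{K_1K_2\left(1-\frac{M_1+M_2}{N}\right)}{K_1K_2\frac{M_1+M_2}{N}+1}=\frac{K_1K_2-t}{t+1}.$$
   Context: Notation: $[a]=\{1,\ldots,a\}$. Hierarchical caching model $(K_1,K_2;M_1,M_2;N)$. A server stores $N$ independent files $W_1,\ldots,W_N$, each uniformly distributed on $B$ bits. There are $K_1$ mirror sites, each with a cache of $M_1B$ bits, and $K_1K_2$ users $U_{k_1,k_2}$ ($k_1\in[K_1]$, $k_2\in[K_2]$), each with a cache of $M_2B$ bits; user $U_{k_1,k_2}$ is attached to mirror site $k_1$. The server reaches all mirror sites through one error-free broadcast link; mirror site $k_1$ reaches its $K_2$ attached users through an error-free broadcast link. A scheme with uncoded placement: in the placement phase (without knowledge of demands) each mirror site $k_1$ stores a subset $\mathcal{Z}_{k_1}$ of the bits of the files, of size at most $M_1B$ bits, and each user $U_{k_1,k_2}$ stores a subset $\mathcal{Z}_{(k_1,k_2)}$ of the bits of the files, of size at most $M_2B$ bits. In the delivery phase, given a demand vector $\mathbf{d}=(d_{k_1,k_2})\in[N]^{K_1K_2}$,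 the server broadcasts to the mirror sites a message $X$ (a function of the files and $\mathbf{d}$) of length $L(\mathbf{d})$ bits; each mirror site $k_1$ broadcasts to its attached users a message $X_{k_1}$ that is a function of $X$, $\mathcal{Z}_{k_1}$ and $\mathbf{d}$; each user $U_{k_1,k_2}$ must recover $W_{d_{k_1,k_2}}$ from $X_{k_1}$, $\mathcal{Z}_{(k_1,k_2)}$ and $\mathbf{d}$. The first-layer load is $R_1=\max_{\mathbf{d}\in[N]^{K_1K_2}}L(\mathbf{d})/B$. The optimal first-layer load under uncoded placement $R_1^*$ is the infimum of $R_1$ over all file sizes $B$ and all such schemes with uncoded placement in which every user decodes correctly. *)

theory Defs
  imports Complex_Main "HOL-Library.FuncSet"
begin

text \<open>A realization of the N files of B bits: file n (n in 1..N), bit b (b < B).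
  Bits of the library are the pairs (n,b) in {1..N} x {..<B}.\<close>
type_synonym files = "nat \<Rightarrow> nat \<Rightarrow> bool"

type_synonym demand = "nat \<times> nat \<Rightarrow> nat"

definition bits :: "nat \<Rightarrow> nat \<Rightarrow> (nat \<times> nat) set" where
  "bits N B = {1..N} \<times> {..<B}"

definition demands :: "nat \<Rightarrow> nat \<Rightarrow> nat \<Rightarrow> demand set" where
  "demands K1 K2 N = ({1..K1} \<times> {1..K2}) \<rightarrow>\<^sub>E {1..N}"

definition valid_files :: "nat \<Rightarrow> nat \<Rightarrow> files \<Rightarrow> bool" where
  "valid_files N B w \<longleftrightarrow> (\<forall>n b. (n, b) \<notin> bits N B \<longrightarrow> \<not> w n b)"

definition cache :: "(nat \<times> nat) set \<Rightarrow> files \<Rightarrow> (nat \<times> nat \<Rightarrow> bool option)" where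
  "cache Z w = (\<lambda>(n, b). if (n, b) \<in> Z then Some (w n b) else None)"

text \<open>A correct scheme with uncoded placement for file size B:
  Zm k1 : bits stored at mirror k1;  Zu (k1,k2) : bits stored at user (k1,k2);
  X d w : server message (length L d);  Y d k1 x c : message of mirror k1;
  D d (k1,k2) y c b : the decoded b-th bit of user (k1,k2).\<close>
definition valid_scheme ::
  "nat \<Rightarrow> nat \<Rightarrow> real \<Rightarrow> real \<Rightarrow> nat \<Rightarrow> nat \<Rightarrow>
   (nat \<Rightarrow> (nat \<times> nat) set) \<Rightarrow> (nat \<times> nat \<Rightarrow> (nat \<times> nat) set) \<Rightarrow>
   (demand \<Rightarrow> nat) \<Rightarrow> (demand \<Rightarrow> files \<Rightarrow> bool list) \<Rightarrow>
   (demand \<Rightarrow> nat \<Rightarrow> bool list \<Rightarrow> (nat \<times> nat \<Rightarrow> bool option) \<Rightarrow> bool list) \<Rightarrow>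
   (demand \<Rightarrow> nat \<times> nat \<Rightarrow> bool list \<Rightarrow> (nat \<times> nat \<Rightarrow> bool option) \<Rightarrow> nat \<Rightarrow> bool) \<Rightarrow> bool" where
  "valid_scheme K1 K2 M1 M2 N B Zm Zu L X Y D \<longleftrightarrow>
     (\<forall>k1\<in>{1..K1}. Zm k1 \<subseteq> bits N B \<and> real (card (Zm k1)) \<le> M1 * real B) \<and>
     (\<forall>k1\<in>{1..K1}. \<forall>k2\<in>{1..K2}. Zu (k1, k2) \<subseteq> bits N B \<and> real (card (Zu (k1, k2))) \<le> M2 * real B) \<and>
     (\<forall>d\<in>demands K1 K2 N. \<forall>w. valid_files N B w \<longrightarrow> length (X d w) = L d) \<and>
     (\<forall>d\<in>demands K1 K2 N. \<forall>k1\<in>{1..K1}. \<forall>k2\<in>{1..K2}. \<forall>w. valid_files N B w \<longrightarrow>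
        (\<forall>b<B. D d (k1, k2) (Y d k1 (X d w) (cache (Zm k1) w)) (cache (Zu (k1, k2)) w) b
               = w (d (k1, k2)) b))"

definition R1_star :: "nat \<Rightarrow> nat \<Rightarrow> real \<Rightarrow> real \<Rightarrow> nat \<Rightarrow> real" where
  "R1_star K1 K2 M1 M2 N = Inf {real (Max (L ` demands K1 K2 N)) / real B | B Zm Zu L X Y D.
      B > 0 \<and> valid_scheme K1 K2 M1 M2 N B Zm Zu L X Y D}"

end

theory Submission
  imports Defs
begin

(*
  Converse: order the users along a list and let the i-th user demand a file depending only on
  its position. Given the server message, the caches of the users determine, from the last user
  backwards, every bit of a requested file that is stored neither at that user nor at any user
  after it, so the load is at least the number of such bits. Averaging over all orderings and all
  cyclic shifts of the demanded files turns this into the sum over all bits b of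
  (K - r b) / (r b + 1), where r b counts the users that can read b from their own or their
  mirror's cache. This function of r b is convex and the r b sum to at most K (M1 + M2) B = N t B,
  so the sum is at least N B (K - t) / (t + 1).

  Achievability: the Maddah-Ali--Niesen scheme with parameter t, where a mirror stores the bits
  whose label contains its whole group and the users store the rest of their share; the mirrors
  forward the coded server message together with their cache, and the server sends
  C(K, t + 1) / C(K, t) = (K - t) / (t + 1) files.
*)
definition cyclic_shift :: "nat \<Rightarrow> nat \<Rightarrow> nat \<Rightarrow> nat" where
  "cyclic_shift N j m = (m + j) mod N + 1"

lemma cyclic_shift_in_range: "N > 0 \<Longrightarrow> cyclic_shift N j m \<in> {1..N}"
  unfolding cyclic_shift_def by (simp add: Suc_le_eq)

lemma inj_on_cyclic_shift: "inj_on (cyclic_shift N j) {1..N}"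
proof (rule inj_onI)
  fix m m' assume m: "m \<in> {1..N}" and m': "m' \<in> {1..N}"
    and "cyclic_shift N j m = cyclic_shift N j m'"
  then have "m mod N = m' mod N"
    unfolding cyclic_shift_def by (simp add: nat_mod_eq_iff)
  with m m' show "m = m'"
    by (metis atLeastAtMost_iff le_neq_implies_less mod_less mod_self not_one_le_zero)
qed

lemma bij_betw_cyclic_shift: "N > 0 \<Longrightarrow> bij_betw (\<lambda>j. cyclic_shift N j m) {..<N} {1..N}"
proof -
  assume N: "N > 0"
  have "inj_on (\<lambda>j. cyclic_shift N j m) {..<N}"
  proof (rule inj_onI)
    fix j j' assume "j \<in> {..<N}" "j' \<in> {..<N}" "cyclic_shift N j m = cyclic_shift N j' m"
    then have "(j + m) mod N = (j' + m) mod N"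
      unfolding cyclic_shift_def by (simp add: add.commute)
    then have "j mod N = j' mod N"
      by (simp add: nat_mod_eq_iff)
    then show "j = j'"
      using \<open>j \<in> {..<N}\<close> \<open>j' \<in> {..<N}\<close> by simp
  qed
  moreover have "(\<lambda>j. cyclic_shift N j m) ` {..<N} \<subseteq> {1..N}"
    using cyclic_shift_in_range[OF N] by blast
  ultimately show ?thesis
    by (simp add: bij_betw_def card_subset_eq card_image)
qed

definition man_load :: "nat \<Rightarrow> nat \<Rightarrow> real" where
  "man_load K r = (real K - real r) / (real r + 1)"

text \<open>The slope of \<open>man_load K\<close> between \<open>t\<close> and \<open>t + 1\<close> is
  \<open>-(K + 1) / ((t + 1) (t + 2))\<close>, so this is convexity of \<open>man_load K\<close> on the integers.\<close>
lemma man_load_above_secant: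
  fixes K r t :: nat
  shows "man_load K t - (real K + 1) * (real r - real t) / ((real t + 1) * (real t + 2))
      \<le> man_load K r"
proof -
  have gap: "man_load K r - (man_load K t - (real K + 1) * (real r - real t) / ((real t + 1) * (real t + 2)))
      = (real K + 1) * ((real t - real r) * (real t + 1 - real r)) / ((real r + 1) * (real t + 1) * (real t + 2))"
  proof -
    have "real r + 1 \<noteq> 0" "real t + 1 \<noteq> 0" "real t + 2 \<noteq> 0" by linarith+
    then show ?thesis unfolding man_load_def by (simp add: divide_simps) algebra
  qed
  have "(real t - real r) * (real t + 1 - real r) \<ge> 0"
    by (cases "r \<le> t") (auto intro: mult_nonneg_nonneg mult_nonpos_nonpos)
  then have "(real K + 1) * ((real t - real r) * (real t + 1 - real r)) / ((real r + 1) * (real t + 1) * (real t + 2)) \<ge> 0"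
    by simp
  then show ?thesis using gap by linarith
qed

lemma card_subsets_containing:
  assumes "finite U" "G \<subseteq> U" "card G \<le> t"
  shows "card {S. S \<subseteq> U \<and> card S = t \<and> G \<subseteq> S} = (card U - card G) choose (t - card G)"
proof -
  have fin_G: "finite G" using assms finite_subset by blast
  have "bij_betw (\<lambda>S. S - G) {S. S \<subseteq> U \<and> card S = t \<and> G \<subseteq> S} {R. R \<subseteq> U - G \<and> card R = t - card G}"
  proof (rule bij_betw_byWitness[where f' = "\<lambda>R. R \<union> G"])
    show "(\<lambda>S. S - G) ` {S. S \<subseteq> U \<and> card S = t \<and> G \<subseteq> S} \<subseteq> {R. R \<subseteq> U - G \<and> card R = t - card G}"
      using assms(1) fin_G by (auto simp: card_Diff_subset dest: finite_subset)
    show "(\<lambda>R. R \<union> G) ` {R. R \<subseteq> U - G \<and> card R = t - card G} \<subseteq> {S. S \<subseteq> U \<and> card S = t \<and> G \<subseteq> S}"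
    proof
      fix S assume "S \<in> (\<lambda>R. R \<union> G) ` {R. R \<subseteq> U - G \<and> card R = t - card G}"
      then obtain R where R: "R \<subseteq> U - G" "card R = t - card G" "S = R \<union> G" by auto
      then have "finite R" "R \<inter> G = {}" using assms(1) finite_subset by auto
      then show "S \<in> {S. S \<subseteq> U \<and> card S = t \<and> G \<subseteq> S}"
        using R assms(2,3) fin_G by (auto simp: card_Un_disjoint)
    qed
  qed auto
  then have "card {S. S \<subseteq> U \<and> card S = t \<and> G \<subseteq> S} = card {R. R \<subseteq> U - G \<and> card R = t - card G}"
    by (rule bij_betw_same_card)
  also have "\<dots> = (card U - card G) choose (t - card G)"
    using assms(1,2) fin_G by (simp add: n_subsets card_Diff_subset)
  finally show ?thesis .
qed

lemma odd_card_filter_insert: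
  assumes "finite S" "u \<notin> S"
  shows "odd (card {v \<in> insert u S. P v}) = (odd (card {v \<in> S. P v}) \<noteq> P u)"
proof (cases "P u")
  case True
  then have "{v \<in> insert u S. P v} = insert u {v \<in> S. P v}" by auto
  then show ?thesis using True assms by simp
next
  case False
  then have "{v \<in> insert u S. P v} = {v \<in> S. P v}" by auto
  then show ?thesis using False by simp
qed

lemma ex_ge_average:
  fixes f :: "'a \<Rightarrow> real"
  assumes "finite A" "A \<noteq> {}"
  shows "\<exists>u\<in>A. (\<Sum>v\<in>A. f v) / real (card A) \<le> f u"
proof -
  have "Max (f ` A) \<in> f ` A" using assms by simp
  then obtain u where u: "u \<in> A" "f u = Max (f ` A)" by auto
  then have "(\<Sum>v\<in>A. f v) \<le> real (card A) * f u"
    using assms(1) by (intro sum_bounded_above) simp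
  moreover have "real (card A) > 0" using assms by (simp add: card_gt_0_iff)
  ultimately show ?thesis using u(1) by (auto simp: divide_le_eq mult.commute)
qed

definition users :: "nat \<Rightarrow> nat \<Rightarrow> (nat \<times> nat) set" where
  "users K1 K2 = {1..K1} \<times> {1..K2}"

lemma finite_users [simp]: "finite (users K1 K2)"
  unfolding users_def by simp

lemma card_users [simp]: "card (users K1 K2) = K1 * K2"
  unfolding users_def by (simp add: card_cartesian_product)

lemma demand_in_range: "d \<in> demands K1 K2 N \<Longrightarrow> u \<in> users K1 K2 \<Longrightarrow> d u \<in> {1..N}"
  unfolding demands_def users_def by auto

lemma finite_demands: "finite (demands K1 K2 N)"
  unfolding demands_def by (simp add: finite_PiE)

lemma ex_demand_on_list:
  assumes "N > 0" "distinct us" "set us \<subseteq> users K1 K2" "\<forall>i<length us. f i \<in> {1..N}"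
  shows "\<exists>d\<in>demands K1 K2 N. \<forall>i<length us. d (us ! i) = f i"
proof
  have inj: "inj_on (nth us) {..<length us}"
    using assms(2) by (simp add: inj_on_nth)
  define g where "g u = (if u \<in> set us then f (the_inv_into {..<length us} (nth us) u) else 1)" for u
  have "g u \<in> {1..N}" for u
  proof (cases "u \<in> set us")
    case True
    then obtain i where "i < length us" "u = us ! i" by (auto simp: in_set_conv_nth)
    then show ?thesis using assms(4) inj by (simp add: g_def the_inv_into_f_f)
  qed (use assms(1) in \<open>simp add: g_def\<close>)
  then show "restrict g (users K1 K2) \<in> demands K1 K2 N"
    unfolding demands_def users_def by simp
  show "\<forall>i<length us. restrict g (users K1 K2) (us ! i) = f i"
  proof (intro allI impI)
    fix i assume "i < length us"
    moreover from this have "us ! i \<in> users K1 K2"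
      using assms(3) nth_mem by blast
    ultimately show "restrict g (users K1 K2) (us ! i) = f i"
      using inj by (simp add: g_def the_inv_into_f_f)
  qed
qed

lemma finite_bits [simp]: "finite (bits N B)"
  unfolding bits_def by simp

lemma demands_nonempty: "0 < N \<Longrightarrow> demands K1 K2 N \<noteq> {}"
proof -
  assume "0 < N"
  then have "restrict (\<lambda>_. 1) ({1..K1} \<times> {1..K2}) \<in> demands K1 K2 N"
    unfolding demands_def by simp
  then show ?thesis by blast
qed

definition file_bits :: "nat \<Rightarrow> nat \<Rightarrow> (nat \<times> nat) set" where
  "file_bits B n = {n} \<times> {..<B}"

lemma finite_file_bits [simp]: "finite (file_bits B n)"
  unfolding file_bits_def by simp

lemma file_bits_subset_bits: "n \<in> {1..N} \<Longrightarrow> file_bits B n \<subseteq> bits N B"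
  unfolding file_bits_def bits_def by auto

lemma file_bits_disjoint: "n \<noteq> n' \<Longrightarrow> file_bits B n \<inter> file_bits B n' = {}"
  unfolding file_bits_def by auto

lemma card_bits_diff: "card (bits N B - S) = (\<Sum>n\<in>{1..N}. card (file_bits B n - S))"
proof -
  have "bits N B - S = (\<Union>n\<in>{1..N}. file_bits B n - S)"
    unfolding bits_def file_bits_def by auto
  also have "card \<dots> = (\<Sum>n\<in>{1..N}. card (file_bits B n - S))"
    by (rule card_UN_disjoint) (auto simp: file_bits_def)
  finally show ?thesis .
qed

definition indicator_files :: "(nat \<times> nat) set \<Rightarrow> files" where
  "indicator_files Q = (\<lambda>n b. (n, b) \<in> Q)"

lemma valid_indicator_files: "Q \<subseteq> bits N B \<Longrightarrow> valid_files N B (indicator_files Q)"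
  unfolding valid_files_def indicator_files_def by auto

lemma cache_indicator_files_eq:
  "Q \<inter> Z = Q' \<inter> Z \<Longrightarrow> cache Z (indicator_files Q) = cache Z (indicator_files Q')"
  unfolding cache_def indicator_files_def by (auto simp: fun_eq_iff)

locale uncoded_scheme =
  fixes K1 K2 :: nat and M1 M2 :: real and N B :: nat
    and Zm :: "nat \<Rightarrow> (nat \<times> nat) set" and Zu :: "nat \<times> nat \<Rightarrow> (nat \<times> nat) set"
    and L :: "demand \<Rightarrow> nat" and X :: "demand \<Rightarrow> files \<Rightarrow> bool list"
    and Y :: "demand \<Rightarrow> nat \<Rightarrow> bool list \<Rightarrow> (nat \<times> nat \<Rightarrow> bool option) \<Rightarrow> bool list"
    and D :: "demand \<Rightarrow> nat \<times> nat \<Rightarrow> bool list \<Rightarrow> (nat \<times> nat \<Rightarrow> bool option) \<Rightarrow> nat \<Rightarrow> bool"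
  assumes valid: "valid_scheme K1 K2 M1 M2 N B Zm Zu L X Y D"
begin

definition avail :: "nat \<times> nat \<Rightarrow> (nat \<times> nat) set" where
  "avail u = Zm (fst u) \<union> Zu u"

definition cached :: "(nat \<times> nat) set \<Rightarrow> (nat \<times> nat) set" where
  "cached A = (\<Union>u\<in>A. avail u)"

lemma avail_subset_bits: "u \<in> users K1 K2 \<Longrightarrow> avail u \<subseteq> bits N B"
  using valid unfolding valid_scheme_def avail_def users_def by (cases u) auto

lemma card_avail_le: "u \<in> users K1 K2 \<Longrightarrow> real (card (avail u)) \<le> (M1 + M2) * real B"
proof -
  assume "u \<in> users K1 K2"
  then obtain k1 k2 where u: "u = (k1, k2)" "k1 \<in> {1..K1}" "k2 \<in> {1..K2}"
    unfolding users_def by auto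
  have "card (avail u) \<le> card (Zm k1) + card (Zu (k1, k2))"
    unfolding avail_def u by (simp add: card_Un_le)
  moreover have "real (card (Zm k1)) \<le> M1 * real B" "real (card (Zu (k1, k2))) \<le> M2 * real B"
    using valid u unfolding valid_scheme_def by auto
  ultimately show ?thesis by (simp add: distrib_right)
qed

lemma length_server_message: "d \<in> demands K1 K2 N \<Longrightarrow> valid_files N B w \<Longrightarrow> length (X d w) = L d"
  using valid unfolding valid_scheme_def by blast

lemma decodes:
  "d \<in> demands K1 K2 N \<Longrightarrow> (k1, k2) \<in> users K1 K2 \<Longrightarrow> valid_files N B w \<Longrightarrow> b < B
    \<Longrightarrow> D d (k1, k2) (Y d k1 (X d w) (cache (Zm k1) w)) (cache (Zu (k1, k2)) w) b = w (d (k1, k2)) b"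
  using valid unfolding valid_scheme_def users_def by blast

lemma requested_file_determined:
  assumes d: "d \<in> demands K1 K2 N" and u: "u \<in> users K1 K2"
    and w: "valid_files N B w" "valid_files N B w'"
    and same_message: "X d w = X d w'"
    and same_cache: "cache (Zm (fst u)) w = cache (Zm (fst u)) w'" "cache (Zu u) w = cache (Zu u) w'"
    and b: "b < B"
  shows "w (d u) b = w' (d u) b"
proof -
  obtain k1 k2 where u': "u = (k1, k2)"
    by fastforce
  have "w (d u) b = D d u (Y d k1 (X d w) (cache (Zm k1) w)) (cache (Zu u) w) b"
    using decodes[OF d _ w(1) b] u unfolding u' by simp
  also have "\<dots> = D d u (Y d k1 (X d w') (cache (Zm k1) w')) (cache (Zu u) w') b"
    using same_message same_cache unfolding u' by simp
  also have "\<dots> = w' (d u) b"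
    using decodes[OF d _ w(2) b] u unfolding u' by simp
  finally show ?thesis .
qed

fun chain_bits :: "demand \<Rightarrow> (nat \<times> nat) list \<Rightarrow> (nat \<times> nat) set" where
  "chain_bits d [] = {}"
| "chain_bits d (u # us) = (file_bits B (d u) - cached (set (u # us))) \<union> chain_bits d us"

lemma chain_bits_subset_bits:
  "d \<in> demands K1 K2 N \<Longrightarrow> set us \<subseteq> users K1 K2 \<Longrightarrow> chain_bits d us \<subseteq> bits N B"
  by (induction us) (auto dest: demand_in_range file_bits_subset_bits)

lemma chain_bits_subset_requested: "chain_bits d us \<subseteq> (\<Union>u\<in>set us. file_bits B (d u))"
  by (induction us) auto

text \<open>Decoding proceeds from the end of the list: each user's cache meets the chain only in bits
  already recovered by the users after it, and the realisations may differ on \<open>E\<close> only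
  where no user of the list looks.\<close>
lemma server_message_determines_chain_bits:
  assumes d: "d \<in> demands K1 K2 N"
    and same_message: "X d (indicator_files Q) = X d (indicator_files Q')"
  shows "set us \<subseteq> users K1 K2 \<Longrightarrow> E \<subseteq> bits N B \<Longrightarrow> E \<inter> cached (set us) = {}
    \<Longrightarrow> Q \<subseteq> chain_bits d us \<union> E \<Longrightarrow> Q' \<subseteq> chain_bits d us \<union> E
    \<Longrightarrow> Q \<inter> chain_bits d us = Q' \<inter> chain_bits d us"
proof (induction us arbitrary: E)
  case (Cons u us)
  define A where "A = file_bits B (d u) - cached (set (u # us))"
  have u: "u \<in> users K1 K2" using Cons.prems(1) by simp
  have chain: "chain_bits d (u # us) = A \<union> chain_bits d us"
    unfolding A_def by simp
  have "A \<subseteq> bits N B"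
    unfolding A_def using file_bits_subset_bits demand_in_range[OF d u] by blast
  then have tail: "Q \<inter> chain_bits d us = Q' \<inter> chain_bits d us"
    using Cons.prems by (intro Cons.IH[of "A \<union> E"]) (auto simp: chain A_def cached_def)
  have "avail u \<subseteq> cached (set (u # us))"
    unfolding cached_def by auto
  then have "A \<inter> avail u = {}" "E \<inter> avail u = {}"
    using Cons.prems(3) unfolding A_def by auto
  then have "Q \<inter> avail u = Q' \<inter> avail u"
    using Cons.prems(4,5) tail unfolding chain by blast
  then have "cache (Zm (fst u)) (indicator_files Q) = cache (Zm (fst u)) (indicator_files Q')"
    "cache (Zu u) (indicator_files Q) = cache (Zu u) (indicator_files Q')"
    by (auto intro!: cache_indicator_files_eq simp: avail_def)
  moreover have "Q \<subseteq> bits N B" "Q' \<subseteq> bits N B"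
    using Cons.prems chain_bits_subset_bits[OF d Cons.prems(1)] by auto
  ultimately have "indicator_files Q (d u) b = indicator_files Q' (d u) b" if "b < B" for b
    using requested_file_determined[OF d u] same_message that by (simp add: valid_indicator_files)
  then have "Q \<inter> A = Q' \<inter> A"
    unfolding A_def file_bits_def indicator_files_def by auto
  with tail show ?case
    unfolding chain by blast
qed simp

lemma card_chain_bits_le_load:
  assumes d: "d \<in> demands K1 K2 N" and us: "set us \<subseteq> users K1 K2"
  shows "card (chain_bits d us) \<le> L d"
proof -
  let ?S = "chain_bits d us"
  let ?msg = "\<lambda>Q. X d (indicator_files Q)"
  have S: "?S \<subseteq> bits N B" using chain_bits_subset_bits[OF d us] .
  then have fin: "finite ?S"
    unfolding bits_def by (rule finite_subset) simp
  have "inj_on ?msg (Pow ?S)"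
  proof (rule inj_onI)
    fix Q Q' assume Q: "Q \<in> Pow ?S" "Q' \<in> Pow ?S" and "?msg Q = ?msg Q'"
    then have "Q \<inter> ?S = Q' \<inter> ?S"
      using server_message_determines_chain_bits[OF d, of Q Q' us "{}"] us by simp
    then show "Q = Q'"
      using Q by blast
  qed
  moreover have "?msg ` Pow ?S \<subseteq> {l. length l = L d}"
    using S by (auto intro!: length_server_message[OF d] valid_indicator_files)
  moreover have "finite {l :: bool list. length l = L d}"
    using finite_lists_length_eq[of "UNIV :: bool set" "L d"] by simp
  ultimately have "card (Pow ?S) \<le> card {l :: bool list. length l = L d}"
    by (metis card_image card_mono)
  then have "2 ^ card ?S \<le> (2 :: nat) ^ L d"
    using fin card_lists_length_eq[of "UNIV :: bool set" "L d"] by (simp add: card_Pow)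
  then show ?thesis by simp
qed

text \<open>The demand of the \<open>i\<close>-th user of a chain \<open>us\<close> is \<open>cyclic_shift N j (length us - i)\<close>;
  these are distinct files, so the chain bits split as a disjoint union.\<close>
fun chain_count :: "nat \<Rightarrow> (nat \<times> nat) list \<Rightarrow> nat" where
  "chain_count j [] = 0"
| "chain_count j (u # us) =
     card (file_bits B (cyclic_shift N j (Suc (length us))) - cached (set (u # us))) + chain_count j us"

lemma card_chain_bits_cyclic_demand:
  assumes "length us \<le> N" "\<forall>i<length us. d (us ! i) = cyclic_shift N j (length us - i)"
  shows "card (chain_bits d us) = chain_count j us"
  using assms
proof (induction us)
  case (Cons u us)
  have du: "d u = cyclic_shift N j (Suc (length us))"
    using Cons.prems(2)[rule_format, of 0] by simp
  have tail: "\<forall>i<length us. d (us ! i) = cyclic_shift N j (length us - i)"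
  proof (intro allI impI)
    fix i assume "i < length us"
    then show "d (us ! i) = cyclic_shift N j (length us - i)"
      using Cons.prems(2)[rule_format, of "Suc i"] by simp
  qed
  have IH: "card (chain_bits d us) = chain_count j us"
    using Cons.IH Cons.prems(1) tail by simp
  have "d v \<noteq> d u" if "v \<in> set us" for v
  proof -
    obtain i where i: "i < length us" "v = us ! i"
      using \<open>v \<in> set us\<close> by (auto simp: in_set_conv_nth)
    have "cyclic_shift N j (length us - i) \<noteq> cyclic_shift N j (Suc (length us))"
    proof
      assume "cyclic_shift N j (length us - i) = cyclic_shift N j (Suc (length us))"
      then have "length us - i = Suc (length us)"
        by (rule inj_onD[OF inj_on_cyclic_shift]) (use i Cons.prems(1) in auto)
      then show False by simp
    qed
    then show ?thesis
      using i tail du by simp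
  qed
  then have "file_bits B (d u) \<inter> (\<Union>v\<in>set us. file_bits B (d v)) = {}"
    using file_bits_disjoint by blast
  then have "(file_bits B (d u) - cached (set (u # us))) \<inter> chain_bits d us = {}"
    using chain_bits_subset_requested[of d us] by blast
  moreover have "finite (chain_bits d us)"
    using chain_bits_subset_requested[of d us] by (rule finite_subset) simp
  ultimately show ?case
    using IH du by (simp add: card_Un_disjoint)
qed simp

text \<open>The mean of \<open>chain_count j\<close> over the orderings of a set \<open>A\<close> of \<open>n\<close> users.\<close>
primrec avg_chain_count :: "nat \<Rightarrow> nat \<Rightarrow> (nat \<times> nat) set \<Rightarrow> real" where
  "avg_chain_count j 0 A = 0"
| "avg_chain_count j (Suc n) A = real (card (file_bits B (cyclic_shift N j (Suc n)) - cached A))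
     + (\<Sum>u\<in>A. avg_chain_count j n (A - {u})) / real (card A)"

lemma ex_ordering_ge_avg_chain_count:
  "finite A \<Longrightarrow> card A = n \<Longrightarrow> \<exists>us. distinct us \<and> set us = A \<and> avg_chain_count j n A \<le> real (chain_count j us)"
proof (induction n arbitrary: A)
  case (Suc n)
  then have "A \<noteq> {}" by auto
  then obtain u where u: "u \<in> A"
    "(\<Sum>v\<in>A. avg_chain_count j n (A - {v})) / real (card A) \<le> avg_chain_count j n (A - {u})"
    using ex_ge_average[OF Suc.prems(1)] by blast
  have card_rest: "card (A - {u}) = n"
    using Suc.prems u(1) by simp
  then obtain us where us: "distinct us" "set us = A - {u}"
    "avg_chain_count j n (A - {u}) \<le> real (chain_count j us)"
    using Suc.IH[of "A - {u}"] Suc.prems(1) by blast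
  have "length us = n"
    using us(1,2) card_rest distinct_card by fastforce
  then have "avg_chain_count j (Suc n) A \<le> real (chain_count j (u # us))"
    using u us by (simp add: insert_absorb)
  moreover have "distinct (u # us)" "set (u # us) = A"
    using u(1) us by auto
  ultimately show ?case
    by blast
qed simp

lemma avg_chain_count_le_load:
  assumes "N > 0" "K1 * K2 \<le> N"
  shows "avg_chain_count j (K1 * K2) (users K1 K2) \<le> real (Max (L ` demands K1 K2 N))"
proof -
  obtain us where us: "distinct us" "set us = users K1 K2"
    "avg_chain_count j (K1 * K2) (users K1 K2) \<le> real (chain_count j us)"
    using ex_ordering_ge_avg_chain_count[OF finite_users card_users] by blast
  have len: "length us = K1 * K2"
    using distinct_card[OF us(1)] us(2) by simp
  have in_range: "\<forall>i<length us. cyclic_shift N j (length us - i) \<in> {1..N}"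
    using cyclic_shift_in_range[OF assms(1)] by blast
  obtain d where d: "d \<in> demands K1 K2 N" "\<forall>i<length us. d (us ! i) = cyclic_shift N j (length us - i)"
    using ex_demand_on_list[OF assms(1) us(1) equalityD1[OF us(2)] in_range] by blast
  have "chain_count j us = card (chain_bits d us)"
    using card_chain_bits_cyclic_demand[of us d j] d(2) len assms(2) by simp
  also have "\<dots> \<le> L d"
    using card_chain_bits_le_load[OF d(1) equalityD1[OF us(2)]] .
  also have "\<dots> \<le> Max (L ` demands K1 K2 N)"
    using d(1) finite_demands by simp
  finally show ?thesis
    using us(3) by linarith
qed

text \<open>The expected number of suffixes of a random ordering of \<open>A\<close> in which no user has bit \<open>b\<close>.\<close>
primrec avg_uncached :: "nat \<Rightarrow> nat \<times> nat \<Rightarrow> (nat \<times> nat) set \<Rightarrow> real" where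
  "avg_uncached 0 b A = 0"
| "avg_uncached (Suc n) b A =
     (if b \<in> cached A then 0 else 1) + (\<Sum>u\<in>A. avg_uncached n b (A - {u})) / real (card A)"

lemma sum_avg_chain_count:
  "N > 0 \<Longrightarrow> (\<Sum>j<N. avg_chain_count j n A) = (\<Sum>b\<in>bits N B. avg_uncached n b A)"
proof (induction n arbitrary: A)
  case (Suc n)
  have "(\<Sum>j<N. real (card (file_bits B (cyclic_shift N j (Suc n)) - cached A)))
      = (\<Sum>m\<in>{1..N}. real (card (file_bits B m - cached A)))"
    using sum.reindex_bij_betw[OF bij_betw_cyclic_shift[OF Suc.prems]] by simp
  also have "\<dots> = real (card (bits N B - cached A))"
    by (simp add: card_bits_diff)
  also have "\<dots> = (\<Sum>b\<in>bits N B. if b \<in> cached A then 0 else 1)"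
    by (simp add: sum.If_cases Diff_eq)
  finally have new_bits: "(\<Sum>j<N. real (card (file_bits B (cyclic_shift N j (Suc n)) - cached A)))
      = (\<Sum>b\<in>bits N B. if b \<in> cached A then 0 else 1)" .
  have "(\<Sum>j<N. \<Sum>u\<in>A. avg_chain_count j n (A - {u}))
      = (\<Sum>u\<in>A. \<Sum>j<N. avg_chain_count j n (A - {u}))"
    by (rule sum.swap)
  also have "\<dots> = (\<Sum>u\<in>A. \<Sum>b\<in>bits N B. avg_uncached n b (A - {u}))"
    using Suc.IH[OF Suc.prems] by simp
  also have "\<dots> = (\<Sum>b\<in>bits N B. \<Sum>u\<in>A. avg_uncached n b (A - {u}))"
    by (rule sum.swap)
  finally show ?case
    using new_bits by (simp add: sum.distrib sum_divide_distrib[symmetric])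
qed simp

lemma avg_uncached_eq_man_load:
  "finite A \<Longrightarrow> card A = n \<Longrightarrow> avg_uncached n b A = man_load n (card {u \<in> A. b \<in> avail u})"
proof (induction n arbitrary: A)
  case 0
  then show ?case by (simp add: man_load_def)
next
  case (Suc n)
  define R where "R = {u \<in> A. b \<in> avail u}"
  define r where "r = card R"
  have fin_R: "finite R" "R \<subseteq> A"
    using Suc.prems(1) unfolding R_def by auto
  have r_le: "r \<le> Suc n"
    using card_mono[OF Suc.prems(1) fin_R(2)] Suc.prems(2) unfolding r_def by simp
  have cached_iff: "b \<in> cached A \<longleftrightarrow> r > 0"
    using fin_R unfolding r_def R_def cached_def by (auto simp: card_gt_0_iff)
  have removed: "avg_uncached n b (A - {u})
      = (if u \<in> R then (real n + 1 - real r) / real r else (real n - real r) / (real r + 1))"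
    if "u \<in> A" for u
  proof -
    have "{v \<in> A - {u}. b \<in> avail v} = R - {u}"
      unfolding R_def by auto
    moreover have "real (card (R - {u})) = (if u \<in> R then real r - 1 else real r)"
    proof (cases "u \<in> R")
      case True
      then have "card R > 0" using fin_R(1) card_gt_0_iff by blast
      then show ?thesis using True fin_R(1) unfolding r_def by (simp add: of_nat_diff)
    qed (simp add: r_def)
    ultimately show ?thesis
      using Suc.IH[of "A - {u}"] Suc.prems that by (auto simp: man_load_def)
  qed
  have "(\<Sum>u\<in>A. avg_uncached n b (A - {u}))
      = (\<Sum>u\<in>A. if u \<in> R then (real n + 1 - real r) / real r else (real n - real r) / (real r + 1))"
    by (rule sum.cong) (simp_all add: removed)
  also have "\<dots> = real r * ((real n + 1 - real r) / real r)
      + real (card (A - R)) * ((real n - real r) / (real r + 1))"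
    using fin_R unfolding sum.If_cases[OF Suc.prems(1)] r_def
    by (simp add: Int_absorb1 Diff_eq)
  also have "real (card (A - R)) = real n + 1 - real r"
    using fin_R r_le Suc.prems(2) unfolding r_def by (simp add: card_Diff_subset of_nat_diff)
  finally have sum_eq: "(\<Sum>u\<in>A. avg_uncached n b (A - {u}))
      = real r * ((real n + 1 - real r) / real r) + (real n + 1 - real r) * ((real n - real r) / (real r + 1))" .
  have "avg_uncached (Suc n) b A = man_load (Suc n) r"
  proof (cases "r = 0")
    case True
    then show ?thesis
      using sum_eq cached_iff Suc.prems(2) by (simp add: man_load_def add.commute)
  next
    case False
    moreover have "real r + 1 \<noteq> 0" by linarith
    ultimately have "(\<Sum>u\<in>A. avg_uncached n b (A - {u})) = (real n + 1 - real r) * (real n + 1) / (real r + 1)"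
      unfolding sum_eq by (simp add: divide_simps) algebra
    then show ?thesis
      using False cached_iff Suc.prems(2) by (simp add: man_load_def add.commute)
  qed
  then show ?case
    unfolding r_def R_def .
qed

lemma sum_multiplicity_le:
  "(\<Sum>b\<in>bits N B. real (card {u \<in> users K1 K2. b \<in> avail u})) \<le> real (K1 * K2) * (M1 + M2) * real B"
proof -
  have "(\<Sum>b\<in>bits N B. real (card {u \<in> users K1 K2. b \<in> avail u}))
      = (\<Sum>b\<in>bits N B. \<Sum>u\<in>users K1 K2. of_bool (b \<in> avail u))"
    by (simp add: Int_def)
  also have "\<dots> = (\<Sum>u\<in>users K1 K2. \<Sum>b\<in>bits N B. of_bool (b \<in> avail u))"
    by (rule sum.swap)
  also have "\<dots> = (\<Sum>u\<in>users K1 K2. real (card (avail u)))"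
    using avail_subset_bits by (intro sum.cong) (auto simp: Int_absorb1 Int_def[symmetric])
  also have "\<dots> \<le> (\<Sum>u\<in>users K1 K2. (M1 + M2) * real B)"
    by (intro sum_mono card_avail_le)
  finally show ?thesis by simp
qed

lemma load_lower_bound:
  assumes K: "0 < K1 * K2" "K1 * K2 \<le> N" and M: "real (K1 * K2) * (M1 + M2) \<le> real N * real t"
  shows "real B * man_load (K1 * K2) t \<le> real (Max (L ` demands K1 K2 N))"
proof -
  define K where "K = K1 * K2"
  define r where "r b = card {u \<in> users K1 K2. b \<in> avail u}" for b
  define c where "c = (real K + 1) / ((real t + 1) * (real t + 2))"
  have N: "N > 0" using K by linarith
  have card_bits: "card (bits N B) = N * B"
    by (simp add: bits_def card_cartesian_product)
  have "real (K1 * K2) * (M1 + M2) * real B \<le> real N * real t * real B"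
    using M by (simp add: mult_right_mono)
  then have "(\<Sum>b\<in>bits N B. real (r b)) \<le> real (N * B) * real t"
    using sum_multiplicity_le unfolding r_def by (simp add: algebra_simps)
  then have "c * ((\<Sum>b\<in>bits N B. real (r b)) - real (N * B) * real t) \<le> 0"
    by (intro mult_nonneg_nonpos) (simp_all add: c_def)
  then have "real (N * B) * man_load K t
      \<le> real (N * B) * man_load K t - c * ((\<Sum>b\<in>bits N B. real (r b)) - real (N * B) * real t)"
    by simp
  also have "\<dots> = (\<Sum>b\<in>bits N B. man_load K t - c * (real (r b) - real t))"
    by (simp add: card_bits sum_subtractf sum_distrib_left algebra_simps)
  also have "\<dots> \<le> (\<Sum>b\<in>bits N B. man_load K (r b))"
    by (intro sum_mono) (use man_load_above_secant[of K t] in \<open>simp add: c_def\<close>)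
  also have "\<dots> = (\<Sum>j<N. avg_chain_count j K (users K1 K2))"
    by (simp add: sum_avg_chain_count[OF N] avg_uncached_eq_man_load K_def r_def)
  also have "\<dots> \<le> real N * real (Max (L ` demands K1 K2 N))"
    using sum_mono[of "{..<N}", OF avg_chain_count_le_load[OF N K(2)]] by (simp add: K_def)
  finally show ?thesis
    using N by (simp add: K_def mult.assoc)
qed

end

lemma cache_eq_Some_True: "cache Z w p = Some True \<longleftrightarrow> p \<in> Z \<and> w (fst p) (snd p)"
  unfolding cache_def by (cases p) auto

text \<open>The Maddah-Ali--Niesen placement: bit \<open>b\<close> of every file is labelled by the \<open>t\<close>-set
  \<open>label b\<close> of users, mirror \<open>k1\<close> keeps the bits whose label contains its whole group, and each
  user keeps the remaining bits whose label contains it. For every \<open>(t+1)\<close>-set \<open>T\<close> the server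
  sends the XOR over \<open>v \<in> T\<close> of the bit of file \<open>d v\<close> labelled \<open>T - {v}\<close>; a mirror forwards
  this message together with its whole cache.\<close>
locale man_scheme =
  fixes K1 K2 t N :: nat and label xor_label :: "nat \<Rightarrow> (nat \<times> nat) set"
  assumes t_pos: "0 < t" and group_le: "K2 \<le> t" and t_less: "t < K1 * K2" and N_pos: "0 < N"
    and label: "bij_betw label {0..<(K1 * K2) choose t} {S. S \<subseteq> users K1 K2 \<and> card S = t}"
    and xor_label: "bij_betw xor_label {0..<(K1 * K2) choose Suc t} {S. S \<subseteq> users K1 K2 \<and> card S = Suc t}"
begin

definition file_size :: nat where
  "file_size = (K1 * K2) choose t"

definition server_load :: nat where
  "server_load = (K1 * K2) choose Suc t"

definition label_index :: "(nat \<times> nat) set \<Rightarrow> nat" where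
  "label_index S = inv_into {0..<file_size} label S"

definition xor_index :: "(nat \<times> nat) set \<Rightarrow> nat" where
  "xor_index S = inv_into {0..<server_load} xor_label S"

definition mirror_cache :: "nat \<Rightarrow> (nat \<times> nat) set" where
  "mirror_cache k1 = {(n, b). n \<in> {1..N} \<and> b < file_size \<and> {k1} \<times> {1..K2} \<subseteq> label b}"

definition user_share :: "nat \<times> nat \<Rightarrow> (nat \<times> nat) set" where
  "user_share u = {(n, b). n \<in> {1..N} \<and> b < file_size \<and> u \<in> label b}"

definition user_cache :: "nat \<times> nat \<Rightarrow> (nat \<times> nat) set" where
  "user_cache u = user_share u - mirror_cache (fst u)"

definition server_msg :: "demand \<Rightarrow> files \<Rightarrow> bool list" where
  "server_msg d w = map (\<lambda>i. odd (card {v \<in> xor_label i. w (d v) (label_index (xor_label i - {v}))})) [0..<server_load]"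

definition mirror_msg :: "demand \<Rightarrow> nat \<Rightarrow> bool list \<Rightarrow> (nat \<times> nat \<Rightarrow> bool option) \<Rightarrow> bool list" where
  "mirror_msg d k1 x c = x @ map (\<lambda>i. c (i div file_size + 1, i mod file_size) = Some True) [0..<N * file_size]"

text \<open>A cache entry \<open>Some True\<close> can only come from a stored bit of value \<open>True\<close>, so the
  disjunction of the user's own cache and the forwarded mirror cache reads a bit correctly as soon
  as one of the two stores it.\<close>
definition known_bit :: "bool list \<Rightarrow> (nat \<times> nat \<Rightarrow> bool option) \<Rightarrow> nat \<times> nat \<Rightarrow> bool" where
  "known_bit y c p = (c p = Some True \<or> y ! (server_load + (fst p - 1) * file_size + snd p))"

definition decode :: "demand \<Rightarrow> nat \<times> nat \<Rightarrow> bool list \<Rightarrow> (nat \<times> nat \<Rightarrow> bool option) \<Rightarrow> nat \<Rightarrow> bool" where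
  "decode d u y c b = (if u \<in> label b then known_bit y c (d u, b)
    else (y ! xor_index (insert u (label b)))
      \<noteq> odd (card {v \<in> label b. known_bit y c (d v, label_index (insert u (label b) - {v}))}))"

lemma label_in_users: "b < file_size \<Longrightarrow> label b \<subseteq> users K1 K2 \<and> card (label b) = t"
  using label unfolding bij_betw_def file_size_def by auto

lemma label_index: "S \<subseteq> users K1 K2 \<Longrightarrow> card S = t \<Longrightarrow> label_index S < file_size \<and> label (label_index S) = S"
proof -
  assume "S \<subseteq> users K1 K2" "card S = t"
  then have S: "S \<in> label ` {0..<file_size}"
    using label unfolding bij_betw_def file_size_def by auto
  then show ?thesis
    unfolding label_index_def using inv_into_into[OF S] f_inv_into_f[OF S] by simp
qed

lemma label_index_label: "b < file_size \<Longrightarrow> label_index (label b) = b"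
  unfolding label_index_def using label unfolding bij_betw_def file_size_def by (simp add: inv_into_f_f)

lemma xor_index: "S \<subseteq> users K1 K2 \<Longrightarrow> card S = Suc t \<Longrightarrow> xor_index S < server_load \<and> xor_label (xor_index S) = S"
proof -
  assume "S \<subseteq> users K1 K2" "card S = Suc t"
  then have S: "S \<in> xor_label ` {0..<server_load}"
    using xor_label unfolding bij_betw_def server_load_def by auto
  then show ?thesis
    unfolding xor_index_def using inv_into_into[OF S] f_inv_into_f[OF S] by simp
qed

lemma length_server_msg: "length (server_msg d w) = server_load"
  unfolding server_msg_def by simp

lemma known_bit_correct:
  assumes u: "u \<in> users K1 K2" and p: "n \<in> {1..N}" "b < file_size" "(n, b) \<in> user_share u"
  shows "known_bit (mirror_msg d (fst u) (server_msg d w) (cache (mirror_cache (fst u)) w))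
    (cache (user_cache u) w) (n, b) = w n b"
proof -
  define i where "i = (n - 1) * file_size + b"
  have "i < (n - 1) * file_size + file_size"
    unfolding i_def using p(2) by simp
  also have "\<dots> = n * file_size"
    using p(1) by (cases n) auto
  also have "\<dots> \<le> N * file_size"
    using p(1) by simp
  finally have "i < N * file_size" .
  moreover have "i div file_size = n - 1" "i mod file_size = b"
    unfolding i_def using p(2) by simp_all
  ultimately have "mirror_msg d (fst u) (server_msg d w) (cache (mirror_cache (fst u)) w) ! (server_load + i)
      = ((n, b) \<in> mirror_cache (fst u) \<and> w n b)"
    unfolding mirror_msg_def using p(1) by (simp add: nth_append length_server_msg cache_eq_Some_True)
  then have "known_bit (mirror_msg d (fst u) (server_msg d w) (cache (mirror_cache (fst u)) w))
      (cache (user_cache u) w) (n, b)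
      = (((n, b) \<in> user_cache u \<and> w n b) \<or> ((n, b) \<in> mirror_cache (fst u) \<and> w n b))"
    unfolding known_bit_def i_def by (simp add: cache_eq_Some_True add.assoc)
  moreover have "(n, b) \<in> mirror_cache (fst u) \<or> (n, b) \<in> user_cache u"
    using p(3) unfolding user_cache_def by blast
  ultimately show ?thesis
    by blast
qed

text \<open>A user missing bit \<open>b\<close> of its file finds it in the XOR for \<open>label b \<union> {u}\<close>: every other
  term of that XOR is labelled by a set containing \<open>u\<close>, hence known to \<open>u\<close>.\<close>
lemma decode_correct:
  assumes d: "d \<in> demands K1 K2 N" and u: "u \<in> users K1 K2" and b: "b < file_size"
  shows "decode d u (mirror_msg d (fst u) (server_msg d w) (cache (mirror_cache (fst u)) w))
    (cache (user_cache u) w) b = w (d u) b"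
proof -
  let ?y = "mirror_msg d (fst u) (server_msg d w) (cache (mirror_cache (fst u)) w)"
  let ?c = "cache (user_cache u) w"
  have lab: "label b \<subseteq> users K1 K2" "card (label b) = t"
    using label_in_users[OF b] by auto
  show ?thesis
  proof (cases "u \<in> label b")
    case True
    then have "(d u, b) \<in> user_share u"
      using b demand_in_range[OF d u] by (simp add: user_share_def)
    then have "known_bit ?y ?c (d u, b) = w (d u) b"
      by (rule known_bit_correct[OF u demand_in_range[OF d u] b])
    then show ?thesis
      unfolding decode_def using True by simp
  next
    case False
    define T where "T = insert u (label b)"
    have fin: "finite (label b)"
      using lab(1) by (rule finite_subset) simp
    have T: "T \<subseteq> users K1 K2" "card T = Suc t"
      unfolding T_def using lab u False fin by simp_all
    define P where "P v = w (d v) (label_index (T - {v}))" for v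
    have idx: "xor_index T < server_load" "xor_label (xor_index T) = T"
      using xor_index[OF T] by simp_all
    have "?y ! xor_index T = server_msg d w ! xor_index T"
      using idx unfolding mirror_msg_def by (simp add: nth_append length_server_msg)
    also have "\<dots> = odd (card {v \<in> T. P v})"
      using idx by (simp add: server_msg_def P_def)
    finally have xor: "?y ! xor_index T = odd (card {v \<in> T. P v})" .
    have known: "known_bit ?y ?c (d v, label_index (T - {v})) = P v" if v: "v \<in> label b" for v
    proof -
      have "T - {v} = insert u (label b - {v})"
        unfolding T_def using v False by auto
      then have sub: "T - {v} \<subseteq> users K1 K2" "card (T - {v}) = t"
        using lab u v False fin t_pos by auto
      have idx: "label_index (T - {v}) < file_size" "label (label_index (T - {v})) = T - {v}"
        using label_index[OF sub] by simp_all
      have dv: "d v \<in> {1..N}"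
        using demand_in_range[OF d] lab(1) v by blast
      have "u \<in> T - {v}"
        using v False unfolding T_def by auto
      then have "(d v, label_index (T - {v})) \<in> user_share u"
        using idx dv by (simp add: user_share_def)
      then show ?thesis
        unfolding P_def by (rule known_bit_correct[OF u dv idx(1)])
    qed
    then have "{v \<in> label b. known_bit ?y ?c (d v, label_index (T - {v}))} = {v \<in> label b. P v}"
      by auto
    then have "decode d u ?y ?c b = (?y ! xor_index T \<noteq> odd (card {v \<in> label b. P v}))"
      unfolding decode_def T_def[symmetric] using False by simp
    also have "\<dots> = P u"
      using xor odd_card_filter_insert[OF fin False, of P] unfolding T_def by (cases "P u") simp_all
    also have "\<dots> = w (d u) b"
      using False label_index_label[OF b] unfolding P_def T_def by simp
    finally show ?thesis .
  qed
qed

lemma card_label_filter: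
  "card {b \<in> {0..<file_size}. P (label b)} = card {S. S \<subseteq> users K1 K2 \<and> card S = t \<and> P S}"
proof -
  have "inj_on label {0..<file_size}"
    using label unfolding bij_betw_def file_size_def by simp
  then have inj: "inj_on label {b \<in> {0..<file_size}. P (label b)}"
    by (rule inj_on_subset) blast
  have img: "label ` {0..<file_size} = {S. S \<subseteq> users K1 K2 \<and> card S = t}"
    using label unfolding bij_betw_def file_size_def by simp
  have "label ` {b \<in> {0..<file_size}. P (label b)} = {S \<in> label ` {0..<file_size}. P S}"
    by blast
  also have "\<dots> = {S. S \<subseteq> users K1 K2 \<and> card S = t \<and> P S}"
    unfolding img by blast
  finally show ?thesis
    using card_image[OF inj] by simp
qed

lemma card_label_supsets:
  assumes "G \<subseteq> users K1 K2" "card G \<le> t"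
  shows "card ({1..N} \<times> {b \<in> {0..<file_size}. G \<subseteq> label b}) = N * ((K1 * K2 - card G) choose (t - card G))"
  using card_label_filter[of "\<lambda>S. G \<subseteq> S"] card_subsets_containing[OF finite_users assms]
  by (simp add: card_cartesian_product)

lemma card_mirror_cache:
  assumes "k1 \<in> {1..K1}"
  shows "card (mirror_cache k1) = N * ((K1 * K2 - K2) choose (t - K2))"
proof -
  have "mirror_cache k1 = {1..N} \<times> {b \<in> {0..<file_size}. {k1} \<times> {1..K2} \<subseteq> label b}"
    unfolding mirror_cache_def by auto
  moreover have "{k1} \<times> {1..K2} \<subseteq> users K1 K2"
    using assms unfolding users_def by auto
  ultimately show ?thesis
    using card_label_supsets[of "{k1} \<times> {1..K2}"] group_le by (simp add: card_cartesian_product)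
qed

lemma card_user_share:
  assumes "u \<in> users K1 K2"
  shows "card (user_share u) = N * ((K1 * K2 - 1) choose (t - 1))"
proof -
  have "user_share u = {1..N} \<times> {b \<in> {0..<file_size}. {u} \<subseteq> label b}"
    unfolding user_share_def by auto
  then show ?thesis
    using card_label_supsets[of "{u}"] assms t_pos by simp
qed

lemma card_user_cache:
  assumes "u \<in> users K1 K2"
  shows "real (card (user_cache u))
    = real N * real ((K1 * K2 - 1) choose (t - 1)) - real N * real ((K1 * K2 - K2) choose (t - K2))"
proof -
  have sub: "mirror_cache (fst u) \<subseteq> user_share u"
    using assms unfolding mirror_cache_def user_share_def users_def by auto
  have fin: "finite (user_share u)"
    unfolding user_share_def by (rule finite_subset[of _ "{1..N} \<times> {..<file_size}"]) auto
  have "fst u \<in> {1..K1}"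
    using assms unfolding users_def by auto
  then show ?thesis
    unfolding user_cache_def
    using card_Diff_subset[OF finite_subset[OF sub fin] sub] card_mono[OF fin sub]
      card_mirror_cache card_user_share[OF assms] by (simp add: of_nat_diff)
qed

lemma valid_man_scheme:
  assumes "real N * real ((K1 * K2 - K2) choose (t - K2)) \<le> M1 * real file_size"
    and "real N * real ((K1 * K2 - 1) choose (t - 1)) - real N * real ((K1 * K2 - K2) choose (t - K2))
      \<le> M2 * real file_size"
  shows "valid_scheme K1 K2 M1 M2 N file_size mirror_cache user_cache (\<lambda>_. server_load)
    server_msg mirror_msg decode"
  unfolding valid_scheme_def
proof (intro conjI ballI allI impI)
  fix k1 assume k1: "k1 \<in> {1..K1}"
  show "mirror_cache k1 \<subseteq> bits N file_size"
    unfolding mirror_cache_def bits_def by auto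
  show "real (card (mirror_cache k1)) \<le> M1 * real file_size"
    using card_mirror_cache[OF k1] assms(1) by simp
next
  fix k1 k2 assume "k1 \<in> {1..K1}" "k2 \<in> {1..K2}"
  then have u: "(k1, k2) \<in> users K1 K2"
    unfolding users_def by simp
  show "user_cache (k1, k2) \<subseteq> bits N file_size"
    unfolding user_cache_def user_share_def bits_def by auto
  show "real (card (user_cache (k1, k2))) \<le> M2 * real file_size"
    using card_user_cache[OF u] assms(2) by simp
  fix d w b assume "d \<in> demands K1 K2 N" "b < file_size"
  then show "decode d (k1, k2) (mirror_msg d k1 (server_msg d w) (cache (mirror_cache k1) w))
      (cache (user_cache (k1, k2)) w) b = w (d (k1, k2)) b"
    using decode_correct[OF _ u] by simp
qed (simp add: length_server_msg)

lemma file_size_pos: "file_size > 0"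
  unfolding file_size_def using t_less by simp

lemma man_scheme_load: "real server_load / real file_size = man_load (K1 * K2) t"
proof -
  define K where "K = K1 * K2"
  have "Suc t * server_load = K * ((K - 1) choose t)"
    using Suc_times_binomial[of t "K - 1"] t_less unfolding server_load_def K_def[symmetric] by simp
  moreover have "(K - t) * file_size = K * ((K - 1) choose t)"
    unfolding file_size_def K_def[symmetric] by (rule binomial_absorb_comp)
  ultimately have "real (Suc t) * real server_load = real (K - t) * real file_size"
    by (metis of_nat_mult)
  then have "(real t + 1) * real server_load = (real K - real t) * real file_size"
    using t_less unfolding K_def by (simp add: of_nat_diff add.commute)
  then show ?thesis
    using file_size_pos unfolding man_load_def K_def by (simp add: field_simps)
qed

end

definition achievable_loads :: "nat \<Rightarrow> nat \<Rightarrow> real \<Rightarrow> real \<Rightarrow> nat \<Rightarrow> real set" where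
  "achievable_loads K1 K2 M1 M2 N = {real (Max (L ` demands K1 K2 N)) / real B | B Zm Zu L X Y D.
      B > 0 \<and> valid_scheme K1 K2 M1 M2 N B Zm Zu L X Y D}"

lemma R1_star_eq_Inf: "R1_star K1 K2 M1 M2 N = Inf (achievable_loads K1 K2 M1 M2 N)"
  unfolding R1_star_def achievable_loads_def ..

lemma achievable_loads_ge_man_load:
  assumes K: "0 < K1 * K2" "K1 * K2 \<le> N" and M: "real (K1 * K2) * (M1 + M2) \<le> real N * real t"
    and x: "x \<in> achievable_loads K1 K2 M1 M2 N"
  shows "man_load (K1 * K2) t \<le> x"
proof -
  obtain B Zm Zu L X Y D where x_eq: "x = real (Max (L ` demands K1 K2 N)) / real B"
    and "B > 0" and "valid_scheme K1 K2 M1 M2 N B Zm Zu L X Y D"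
    using x unfolding achievable_loads_def by blast
  then interpret uncoded_scheme K1 K2 M1 M2 N B Zm Zu L X Y D
    by unfold_locales
  show ?thesis
    using load_lower_bound[OF K M] \<open>B > 0\<close> unfolding x_eq by (simp add: field_simps)
qed

lemma ex_enumeration_subsets:
  assumes "finite U"
  shows "\<exists>h. bij_betw h {0..<card U choose k} {S. S \<subseteq> U \<and> card S = k}"
proof -
  have "{S. S \<subseteq> U \<and> card S = k} \<subseteq> Pow U"
    by blast
  moreover have "finite (Pow U)"
    using assms by simp
  ultimately have "finite {S. S \<subseteq> U \<and> card S = k}"
    by (rule finite_subset)
  from ex_bij_betw_nat_finite[OF this] show ?thesis
    unfolding n_subsets[OF assms] .
qed

lemma man_load_achievable:
  assumes t: "0 < t" "K2 \<le> t" "t < K1 * K2" and N: "0 < N"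
    and M1: "real N * real ((K1 * K2 - K2) choose (t - K2)) \<le> M1 * real ((K1 * K2) choose t)"
    and M2: "real N * real ((K1 * K2 - 1) choose (t - 1)) - real N * real ((K1 * K2 - K2) choose (t - K2))
      \<le> M2 * real ((K1 * K2) choose t)"
  shows "man_load (K1 * K2) t \<in> achievable_loads K1 K2 M1 M2 N"
proof -
  obtain label where
    "bij_betw label {0..<(K1 * K2) choose t} {S. S \<subseteq> users K1 K2 \<and> card S = t}"
    using ex_enumeration_subsets[OF finite_users, of K1 K2 t] by auto
  moreover obtain xor_label where
    "bij_betw xor_label {0..<(K1 * K2) choose Suc t} {S. S \<subseteq> users K1 K2 \<and> card S = Suc t}"
    using ex_enumeration_subsets[OF finite_users, of K1 K2 "Suc t"] by auto
  ultimately interpret man_scheme K1 K2 t N label xor_label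
    using t N by unfold_locales
  have valid: "valid_scheme K1 K2 M1 M2 N file_size mirror_cache user_cache (\<lambda>_. server_load)
      server_msg mirror_msg decode"
    using valid_man_scheme M1 M2 unfolding file_size_def by simp
  have "(\<lambda>_. server_load) ` demands K1 K2 N = {server_load}"
    using demands_nonempty[OF N, of K1 K2] by auto
  then have load: "man_load (K1 * K2) t = real (Max ((\<lambda>_. server_load) ` demands K1 K2 N)) / real file_size"
    using man_scheme_load by simp
  show ?thesis
    unfolding achievable_loads_def
    by (intro CollectI exI conjI, rule load, rule file_size_pos, rule valid)
qed

lemma man_load_eq_memory_form:
  "0 < K \<Longrightarrow> man_load K t = real K * (1 - real t / real K) / (real K * (real t / real K) + 1)"
  unfolding man_load_def by (simp add: right_diff_distrib)

lemma R1_star_eq_man_load: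
  assumes "0 < t" "K2 \<le> t" "t < K1 * K2" "K1 * K2 \<le> N"
    and "real N * real ((K1 * K2 - K2) choose (t - K2)) \<le> M1 * real ((K1 * K2) choose t)"
    and "real N * real ((K1 * K2 - 1) choose (t - 1)) - real N * real ((K1 * K2 - K2) choose (t - K2))
      \<le> M2 * real ((K1 * K2) choose t)"
    and "real (K1 * K2) * (M1 + M2) \<le> real N * real t"
  shows "R1_star K1 K2 M1 M2 N = man_load (K1 * K2) t"
  unfolding R1_star_eq_Inf
proof (rule cInf_eq_minimum)
  show "man_load (K1 * K2) t \<in> achievable_loads K1 K2 M1 M2 N"
    using assms by (intro man_load_achievable) simp_all
  have "0 < K1 * K2"
    using assms(3) by linarith
  then show "man_load (K1 * K2) t \<le> x" if "x \<in> achievable_loads K1 K2 M1 M2 N" for x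
    using assms that by (intro achievable_loads_ge_man_load) simp_all
qed

lemma memory_pair_eqs:
  fixes a :: real
  assumes t: "0 < t" "t \<le> K" and N: "0 < N"
    and M1: "M1 / real N = a / real (K choose t)"
    and M2: "M2 / real N = real t / real K - a / real (K choose t)"
  shows "M1 * real (K choose t) = real N * a"
    and "M2 * real (K choose t) = real N * real ((K - 1) choose (t - 1)) - real N * a"
    and "(M1 + M2) / real N = real t / real K"
proof -
  have C: "real (K choose t) \<noteq> 0" and K: "real K \<noteq> 0"
    using t by simp_all
  have M1': "M1 = real N * a / real (K choose t)" and M2': "M2 = real N * (real t / real K - a / real (K choose t))"
    using M1 M2 N by (simp_all add: divide_eq_eq field_simps)
  have "real t * real (K choose t) = real K * real ((K - 1) choose (t - 1))"
    using times_binomial_minus1_eq[OF t(1), of K] by (metis of_nat_mult)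
  then show "M1 * real (K choose t) = real N * a"
    and "M2 * real (K choose t) = real N * real ((K - 1) choose (t - 1)) - real N * a"
    unfolding M1' M2' using C K by (simp_all add: field_simps)
  show "(M1 + M2) / real N = real t / real K"
    using M1 M2 by (simp add: add_divide_distrib)
qed

theorem corollary1:
  fixes K1 K2 t N :: nat and M1 M2 :: real
  assumes "K1 > 0" "K2 > 0" "t > 0"
    and "K2 < t" "t < K1 * K2"
    and "N \<ge> K1 * K2"
    and "M1 / real N = real ((K1 * K2 - K2) choose (t - K2)) / real ((K1 * K2) choose t)"
    and "M2 / real N = real t / real (K1 * K2)
           - real ((K1 * K2 - K2) choose (t - K2)) / real ((K1 * K2) choose t)"
  shows "R1_star K1 K2 M1 M2 N
           = real (K1 * K2) * (1 - (M1 + M2) / real N) / (real (K1 * K2) * ((M1 + M2) / real N) + 1)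
       \<and> R1_star K1 K2 M1 M2 N = (real (K1 * K2) - real t) / (real t + 1)"
proof -
  have N: "0 < N" and K: "0 < K1 * K2"
    using assms by auto
  note memory = memory_pair_eqs[OF assms(3) less_imp_le[OF assms(5)] N assms(7,8)]
  have "real (K1 * K2) * (M1 + M2) = real N * real t"
    using memory(3) N K by (simp add: field_simps)
  then have "R1_star K1 K2 M1 M2 N = man_load (K1 * K2) t"
    using assms memory(1,2) by (intro R1_star_eq_man_load) simp_all
  then show ?thesis
    using man_load_eq_memory_form[OF K, of t] memory(3) by (simp add: man_load_def)
qed
end
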